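(* Let $G_1=(V_1,E_1)$ and $G_2=(V_2,E_2)$ be connected graphs whose path metrics are conditionally strictly negative definite, and let $o\in V_2$. Then the path metric of the comb product $G_1\triangleright_o G_2$ is conditionally strictly negative definite.
   Context: The comb product $G_1\triangleright_o G_2$ is the graph obtained from $G_1$ by attaching to each vertex $v\in V_1$ its own copy of $G_2$, identifying the vertex $o$ of that copy with $v$ (copies attached at different vertices are disjoint otherwise). The path metric of a connected graph is the shortest-path distance on its vertex set. A symmetric real function $K$ on $V\times V$ is conditionally strictly negative definite if for every finitely supported $\lambda\colon V\to\mathbb{C}$, $\lambda\neq0$, with $\sum_v\lambda(v)=0$ one has $\sum_{x,y}\lambda(x)\overline{\lambda(y)}K(x,y)<0$. *)

theory Defs
  imports Complex_Main "HOL-Library.Complex_Order"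
begin

definition graph :: "'a set \<Rightarrow> ('a \<Rightarrow> 'a \<Rightarrow> bool) \<Rightarrow> bool" where
  "graph V E \<longleftrightarrow> (\<forall>x y. E x y \<longrightarrow> x \<in> V \<and> y \<in> V) \<and>
                  (\<forall>x y. E x y \<longrightarrow> E y x) \<and> (\<forall>x. \<not> E x x)"

definition is_walk :: "('a \<Rightarrow> 'a \<Rightarrow> bool) \<Rightarrow> 'a \<Rightarrow> 'a \<Rightarrow> 'a list \<Rightarrow> bool" where
  "is_walk E x y xs \<longleftrightarrow> xs \<noteq> [] \<and> hd xs = x \<and> last xs = y \<and> successively E xs"

definition connected_graph :: "'a set \<Rightarrow> ('a \<Rightarrow> 'a \<Rightarrow> bool) \<Rightarrow> bool" where
  "connected_graph V E \<longleftrightarrow> graph V E \<and> (\<forall>x\<in>V. \<forall>y\<in>V. \<exists>xs. is_walk E x y xs)"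

definition path_dist :: "('a \<Rightarrow> 'a \<Rightarrow> bool) \<Rightarrow> 'a \<Rightarrow> 'a \<Rightarrow> nat" where
  "path_dist E x y = (LEAST n. \<exists>xs. is_walk E x y xs \<and> length xs = Suc n)"

definition cond_strict_neg_def :: "'a set \<Rightarrow> ('a \<Rightarrow> 'a \<Rightarrow> real) \<Rightarrow> bool" where
  "cond_strict_neg_def V K \<longleftrightarrow>
     (\<forall>lam :: 'a \<Rightarrow> complex.
        finite {v. lam v \<noteq> 0} \<and> {v. lam v \<noteq> 0} \<subseteq> V \<and> (\<exists>v. lam v \<noteq> 0) \<and>
        (\<Sum>v\<in>{v. lam v \<noteq> 0}. lam v) = 0 \<longrightarrow>
        (\<Sum>x\<in>{v. lam v \<noteq> 0}. \<Sum>y\<in>{v. lam v \<noteq> 0}. lam x * cnj (lam y) * complex_of_real (K x y)) < 0)"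

text \<open>Comb product G1 \<triangleright>_r G2: vertex (v, x) is vertex x of the copy of G2
attached at v \<in> V1; the vertex (v, r) is identified with v itself.\<close>
definition comb_vertices :: "'a set \<Rightarrow> 'b set \<Rightarrow> ('a \<times> 'b) set" where
  "comb_vertices V1 V2 = V1 \<times> V2"

definition comb_edges :: "('a \<Rightarrow> 'a \<Rightarrow> bool) \<Rightarrow> ('b \<Rightarrow> 'b \<Rightarrow> bool) \<Rightarrow> 'b \<Rightarrow>
                         ('a \<times> 'b) \<Rightarrow> ('a \<times> 'b) \<Rightarrow> bool" where
  "comb_edges E1 E2 r p q \<longleftrightarrow>
     (snd p = r \<and> snd q = r \<and> E1 (fst p) (fst q)) \<or> (fst p = fst q \<and> E2 (snd p) (snd q))"

end

theory Submission
  imports Defs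
begin

text \<open>In the comb product a shortest path between vertices of different teeth leaves its tooth
through the root, runs along the spine and enters the other tooth through its root, so the
distance of (u, x) and (v, y) is d2(x, o) + d1(u, v) + d2(o, y) for u \<noteq> v and d2(x, y) for u = v.
For coefficients c with total sum zero, this turns the quadratic form of the comb into the
d1-form of the tooth sums mu(u) = \<Sum>x c(u, x) plus, for every tooth u, the d2-form of c(u, -)
with the mass mu(u) removed at the root. All these vectors have sum zero, so every term is
nonpositive, and they can only all vanish if c does.\<close>

section \<open>Walks and path distance\<close>

lemma is_walk_singleton: "is_walk E x x [x]"
  by (simp add: is_walk_def)

lemma is_walk_Cons: "E a b \<Longrightarrow> is_walk E b c ys \<Longrightarrow> is_walk E a c (a # ys)"
  unfolding is_walk_def by (simp add: successively_Cons)

lemma is_walk_append: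
  assumes "is_walk E x y xs" "is_walk E y z ys"
  shows "is_walk E x z (xs @ tl ys)"
  using assms by (cases ys; cases "tl ys")
    (auto simp: is_walk_def successively_append_iff successively_Cons)

lemma is_walk_map:
  assumes "is_walk E x y xs" "\<And>a b. E a b \<Longrightarrow> F (f a) (f b)"
  shows "is_walk F (f x) (f y) (map f xs)"
proof -
  have "successively (\<lambda>a b. F (f a) (f b)) xs"
    using assms unfolding is_walk_def by (auto intro: successively_mono)
  then show ?thesis
    using assms(1) unfolding is_walk_def by (simp add: successively_map hd_map last_map)
qed

lemma path_dist_less_length: "is_walk E x y xs \<Longrightarrow> path_dist E x y < length xs"
proof -
  assume walk: "is_walk E x y xs"
  then have "length xs = Suc (length xs - 1)"
    by (simp add: is_walk_def)
  then have "path_dist E x y \<le> length xs - 1"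
    unfolding path_dist_def using walk by (intro Least_le) blast
  then show ?thesis
    using walk by (cases xs) (auto simp: is_walk_def)
qed

lemma path_dist_attained:
  assumes "connected_graph V E" "x \<in> V" "y \<in> V"
  obtains xs where "is_walk E x y xs" "length xs = Suc (path_dist E x y)"
proof -
  obtain xs where walk: "is_walk E x y xs"
    using assms unfolding connected_graph_def by blast
  then have "\<exists>n xs. is_walk E x y xs \<and> length xs = Suc n"
    by (intro exI[of _ "length xs - 1"] exI[of _ xs]) (auto simp: is_walk_def)
  then have "\<exists>xs. is_walk E x y xs \<and> length xs = Suc (path_dist E x y)"
    unfolding path_dist_def by (rule LeastI_ex)
  then show ?thesis
    using that by blast
qed

lemma path_dist_self [simp]: "path_dist E x x = 0"
  using path_dist_less_length[OF is_walk_singleton] by simp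

lemma path_dist_edge_le:
  assumes "connected_graph V E" "E a b" "c \<in> V"
  shows "path_dist E a c \<le> path_dist E b c + 1"
proof -
  have "b \<in> V"
    using assms(1,2) unfolding connected_graph_def graph_def by blast
  then obtain ys where ys: "is_walk E b c ys" "length ys = Suc (path_dist E b c)"
    using path_dist_attained[OF assms(1) _ assms(3)] by blast
  show ?thesis
    using path_dist_less_length[OF is_walk_Cons[OF assms(2) ys(1)]] ys(2) by simp
qed

section \<open>Path distance in a comb product\<close>

text \<open>For the path metrics of G1 and G2 this is the path metric of the comb product rooted at r;
it is defined for arbitrary kernels because negativity only uses D1 u u = 0 and D2 r r = 0.\<close>
definition comb_kernel ::
  "('a \<Rightarrow> 'a \<Rightarrow> 'c::plus) \<Rightarrow> ('b \<Rightarrow> 'b \<Rightarrow> 'c) \<Rightarrow> 'b \<Rightarrow> 'a \<times> 'b \<Rightarrow> 'a \<times> 'b \<Rightarrow> 'c"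
  where "comb_kernel D1 D2 r p q =
    (if fst p = fst q then D2 (snd p) (snd q)
     else D2 (snd p) r + D1 (fst p) (fst q) + D2 r (snd q))"

lemma comb_edges_closed:
  assumes "graph V1 E1" "graph V2 E2" "p \<in> V1 \<times> V2" "comb_edges E1 E2 r p q"
  shows "q \<in> V1 \<times> V2"
  using assms unfolding comb_edges_def graph_def by (cases p; cases q) auto

lemma comb_kernel_path_dist_edge_le:
  assumes G1: "connected_graph V1 E1" and G2: "connected_graph V2 E2" and r: "r \<in> V2"
    and q: "q \<in> V1 \<times> V2" and edge: "comb_edges E1 E2 r p p'"
  shows "comb_kernel (path_dist E1) (path_dist E2) r p q
    \<le> comb_kernel (path_dist E1) (path_dist E2) r p' q + 1"
proof -
  obtain u x u' x' v y where pq: "p = (u, x)" "p' = (u', x')" "q = (v, y)"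
    by (cases p; cases p'; cases q)
  from edge consider (spine) "x = r" "x' = r" "E1 u u'" | (tooth) "u = u'" "E2 x x'"
    unfolding comb_edges_def pq by auto
  then show ?thesis
  proof cases
    case spine
    have "u \<noteq> u'" "u' \<in> V1"
      using spine(3) G1 unfolding connected_graph_def graph_def by blast+
    moreover have "path_dist E1 u u' \<le> 1"
      using path_dist_edge_le[OF G1 spine(3) \<open>u' \<in> V1\<close>] by simp
    moreover have "path_dist E1 u v \<le> path_dist E1 u' v + 1"
      using path_dist_edge_le[OF G1 spine(3)] q pq by simp
    ultimately show ?thesis
      using spine unfolding comb_kernel_def pq by auto
  next
    case tooth
    have "path_dist E2 x y \<le> path_dist E2 x' y + 1"
      using path_dist_edge_le[OF G2 tooth(2)] q pq by simp
    moreover have "path_dist E2 x r \<le> path_dist E2 x' r + 1"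
      using path_dist_edge_le[OF G2 tooth(2) r] .
    ultimately show ?thesis
      using tooth unfolding comb_kernel_def pq by auto
  qed
qed

lemma comb_kernel_path_dist_less_length:
  assumes G1: "connected_graph V1 E1" and G2: "connected_graph V2 E2" and r: "r \<in> V2"
    and q: "q \<in> V1 \<times> V2"
  shows "is_walk (comb_edges E1 E2 r) p q ws \<Longrightarrow> p \<in> V1 \<times> V2 \<Longrightarrow>
    comb_kernel (path_dist E1) (path_dist E2) r p q < length ws"
proof (induction ws arbitrary: p)
  case Nil
  then show ?case by (simp add: is_walk_def)
next
  case (Cons a ws)
  show ?case
  proof (cases ws)
    case Nil
    then show ?thesis
      using Cons.prems by (auto simp: is_walk_def comb_kernel_def)
  next
    case (Cons p' ws')
    have edge: "comb_edges E1 E2 r p p'" and walk: "is_walk (comb_edges E1 E2 r) p' q ws"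
      using Cons.prems Cons by (auto simp: is_walk_def)
    have "p' \<in> V1 \<times> V2"
      using G1 G2 comb_edges_closed[OF _ _ Cons.prems(2) edge] by (simp add: connected_graph_def)
    then show ?thesis
      using Cons.IH[OF walk] comb_kernel_path_dist_edge_le[OF G1 G2 r q edge] by simp
  qed
qed

lemma comb_kernel_path_dist_attained:
  assumes G1: "connected_graph V1 E1" and G2: "connected_graph V2 E2" and r: "r \<in> V2"
    and "(u, x) \<in> V1 \<times> V2" "(v, y) \<in> V1 \<times> V2"
  obtains ws where "is_walk (comb_edges E1 E2 r) (u, x) (v, y) ws"
    "length ws = Suc (comb_kernel (path_dist E1) (path_dist E2) r (u, x) (v, y))"
proof -
  have uv: "u \<in> V1" "v \<in> V1" and xy: "x \<in> V2" "y \<in> V2"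
    using assms(4,5) by auto
  have tooth: "is_walk (comb_edges E1 E2 r) (w, a) (w, b) (map (Pair w) zs)"
    if "is_walk E2 a b zs" for w a b zs
    using is_walk_map[OF that, of "comb_edges E1 E2 r" "Pair w"] by (simp add: comb_edges_def)
  have spine: "is_walk (comb_edges E1 E2 r) (a, r) (b, r) (map (\<lambda>w. (w, r)) zs)"
    if "is_walk E1 a b zs" for a b zs
    using is_walk_map[OF that, of "comb_edges E1 E2 r" "\<lambda>w. (w, r)"] by (simp add: comb_edges_def)
  show ?thesis
  proof (cases "u = v")
    case True
    obtain zs where zs: "is_walk E2 x y zs" "length zs = Suc (path_dist E2 x y)"
      using path_dist_attained[OF G2 xy] by blast
    show ?thesis
      using that[of "map (Pair u) zs"] tooth[OF zs(1), of u] zs(2) True by (simp add: comb_kernel_def)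
  next
    case False
    obtain xs where xs: "is_walk E2 x r xs" "length xs = Suc (path_dist E2 x r)"
      using path_dist_attained[OF G2 xy(1) r] by blast
    obtain zs where zs: "is_walk E1 u v zs" "length zs = Suc (path_dist E1 u v)"
      using path_dist_attained[OF G1 uv] by blast
    obtain ys where ys: "is_walk E2 r y ys" "length ys = Suc (path_dist E2 r y)"
      using path_dist_attained[OF G2 r xy(2)] by blast
    let ?ws = "(map (Pair u) xs @ tl (map (\<lambda>w. (w, r)) zs)) @ tl (map (Pair v) ys)"
    have "is_walk (comb_edges E1 E2 r) (u, x) (v, y) ?ws"
      using is_walk_append[OF is_walk_append[OF tooth[OF xs(1)] spine[OF zs(1)]] tooth[OF ys(1)]] .
    moreover have "length ?ws = Suc (comb_kernel (path_dist E1) (path_dist E2) r (u, x) (v, y))"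
      using xs(2) zs(2) ys(2) False by (simp add: comb_kernel_def)
    ultimately show ?thesis
      using that by blast
  qed
qed

lemma path_dist_comb_edges:
  assumes "connected_graph V1 E1" "connected_graph V2 E2" "r \<in> V2"
    and "p \<in> V1 \<times> V2" "q \<in> V1 \<times> V2"
  shows "path_dist (comb_edges E1 E2 r) p q = comb_kernel (path_dist E1) (path_dist E2) r p q"
  unfolding path_dist_def[of "comb_edges E1 E2 r" p q]
proof (rule Least_equality)
  show "\<exists>ws. is_walk (comb_edges E1 E2 r) p q ws \<and>
      length ws = Suc (comb_kernel (path_dist E1) (path_dist E2) r p q)"
    using comb_kernel_path_dist_attained[OF assms(1-3), of "fst p" "snd p" "fst q" "snd q"] assms(4,5)
    by auto
next
  fix n
  assume "\<exists>ws. is_walk (comb_edges E1 E2 r) p q ws \<and> length ws = Suc n"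
  then show "comb_kernel (path_dist E1) (path_dist E2) r p q \<le> n"
    using comb_kernel_path_dist_less_length[OF assms(1-3,5)] assms(4) by fastforce
qed

section \<open>Conditionally strictly negative definite kernels\<close>

definition quad_form :: "'a set \<Rightarrow> ('a \<Rightarrow> complex) \<Rightarrow> ('a \<Rightarrow> 'a \<Rightarrow> real) \<Rightarrow> complex"
  where "quad_form A c K = (\<Sum>x\<in>A. \<Sum>y\<in>A. c x * cnj (c y) * complex_of_real (K x y))"

lemma quad_form_mono_neutral:
  assumes "finite A" "S \<subseteq> A" "\<And>x. x \<in> A - S \<Longrightarrow> c x = 0"
  shows "quad_form A c K = quad_form S c K"
proof -
  have inner: "(\<Sum>y\<in>A. c x * cnj (c y) * complex_of_real (K x y)) =
        (\<Sum>y\<in>S. c x * cnj (c y) * complex_of_real (K x y))" for x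
    using assms by (intro sum.mono_neutral_right) auto
  have "quad_form A c K = (\<Sum>x\<in>A. \<Sum>y\<in>S. c x * cnj (c y) * complex_of_real (K x y))"
    unfolding quad_form_def inner ..
  also have "\<dots> = quad_form S c K"
    unfolding quad_form_def using assms by (intro sum.mono_neutral_right) auto
  finally show ?thesis .
qed

lemma cond_strict_neg_def_iff:
  "cond_strict_neg_def V K \<longleftrightarrow>
    (\<forall>A c. A \<subseteq> V \<longrightarrow> finite A \<longrightarrow> (\<forall>v. v \<notin> A \<longrightarrow> c v = 0) \<longrightarrow> sum c A = 0 \<longrightarrow>
      (\<exists>v. c v \<noteq> 0) \<longrightarrow> quad_form A c K < 0)"
proof
  assume csnd: "cond_strict_neg_def V K"
  show "\<forall>A c. A \<subseteq> V \<longrightarrow> finite A \<longrightarrow> (\<forall>v. v \<notin> A \<longrightarrow> c v = 0) \<longrightarrow> sum c A = 0 \<longrightarrow>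
      (\<exists>v. c v \<noteq> 0) \<longrightarrow> quad_form A c K < 0"
  proof (intro allI impI)
    fix A and c :: "'a \<Rightarrow> complex"
    assume A: "A \<subseteq> V" "finite A" "\<forall>v. v \<notin> A \<longrightarrow> c v = 0" "sum c A = 0" "\<exists>v. c v \<noteq> 0"
    define S where "S = {v. c v \<noteq> 0}"
    have "S \<subseteq> A"
      using A(3) S_def by blast
    then have "finite S" "S \<subseteq> V" "sum c S = 0" "quad_form A c K = quad_form S c K"
      using A(1,2,4) sum.mono_neutral_right[OF A(2) \<open>S \<subseteq> A\<close>, of c]
      by (auto simp: S_def intro: finite_subset quad_form_mono_neutral)
    moreover have "quad_form S c K < 0"
      using csnd \<open>finite S\<close> \<open>S \<subseteq> V\<close> \<open>sum c S = 0\<close> A(5)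
      unfolding cond_strict_neg_def_def quad_form_def S_def by blast
    ultimately show "quad_form A c K < 0"
      by simp
  qed
next
  assume "\<forall>A c. A \<subseteq> V \<longrightarrow> finite A \<longrightarrow> (\<forall>v. v \<notin> A \<longrightarrow> c v = 0) \<longrightarrow> sum c A = 0 \<longrightarrow>
      (\<exists>v. c v \<noteq> 0) \<longrightarrow> quad_form A c K < 0"
  then show "cond_strict_neg_def V K"
    unfolding cond_strict_neg_def_def quad_form_def by auto
qed

lemma cond_strict_neg_defD:
  assumes "cond_strict_neg_def V K" "A \<subseteq> V" "finite A" "\<And>v. v \<notin> A \<Longrightarrow> c v = 0"
    "sum c A = 0" "c v \<noteq> 0"
  shows "quad_form A c K < 0"
  using cond_strict_neg_def_iff[THEN iffD1, rule_format, OF assms(1-3)] assms(4-6) by blast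

lemma cond_strict_neg_def_nonpos:
  assumes "cond_strict_neg_def V K" "A \<subseteq> V" "finite A" "\<And>v. v \<notin> A \<Longrightarrow> c v = 0"
    "sum c A = 0"
  shows "quad_form A c K \<le> 0"
proof (cases "\<exists>v. c v \<noteq> 0")
  case True
  then show ?thesis
    using cond_strict_neg_defD[OF assms] less_imp_le by blast
qed (simp add: quad_form_def)

lemma cond_strict_neg_def_cong:
  assumes "\<And>x y. x \<in> V \<Longrightarrow> y \<in> V \<Longrightarrow> K x y = K' x y"
  shows "cond_strict_neg_def V K \<longleftrightarrow> cond_strict_neg_def V K'"
proof -
  have "quad_form A c K = quad_form A c K'" if "A \<subseteq> V" for A c
    unfolding quad_form_def using that assms by (intro sum.cong refl) (auto simp: subset_iff)
  then show ?thesis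
    unfolding cond_strict_neg_def_iff by (simp cong: imp_cong)
qed

lemma sum_sum_separable:
  fixes f g A C :: "'x \<Rightarrow> 'c::comm_semiring_1"
  shows "(\<Sum>x\<in>X. \<Sum>y\<in>X. f x * g y * (A x + B + C y)) =
    (\<Sum>x\<in>X. f x * A x) * (\<Sum>y\<in>X. g y) + B * (\<Sum>x\<in>X. f x) * (\<Sum>y\<in>X. g y)
    + (\<Sum>x\<in>X. f x) * (\<Sum>y\<in>X. g y * C y)"
proof -
  have "B * (\<Sum>x\<in>X. f x) * (\<Sum>y\<in>X. g y) = (\<Sum>x\<in>X. \<Sum>y\<in>X. B * (f x * g y))"
    by (subst mult.assoc, subst sum_product) (simp add: sum_distrib_left)
  moreover have "f x * g y * (A x + B + C y) = f x * A x * g y + B * (f x * g y) + f x * (g y * C y)"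
    for x y by (simp add: algebra_simps)
  ultimately show ?thesis
    by (simp only: sum.distrib sum_product)
qed

lemma quad_form_sub_point_mass:
  assumes X: "finite X" "r \<in> X" and D: "D r r = 0"
  shows "quad_form X (\<lambda>x. f x - (if x = r then m else 0)) D
    = quad_form X f D - cnj m * (\<Sum>x\<in>X. f x * complex_of_real (D x r))
      - m * (\<Sum>y\<in>X. cnj (f y) * complex_of_real (D r y))"
proof -
  define \<delta> where "\<delta> x = (if x = r then (1::complex) else 0)" for x
  have expand: "(f x - (if x = r then m else 0)) * cnj (f y - (if y = r then m else 0))
       * complex_of_real (D x y)
     = f x * cnj (f y) * complex_of_real (D x y) - cnj m * (\<delta> y * (f x * complex_of_real (D x y)))
       - m * (\<delta> x * (cnj (f y) * complex_of_real (D x y)))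
       + m * cnj m * (\<delta> x * (\<delta> y * complex_of_real (D x y)))" for x y
    by (simp add: \<delta>_def algebra_simps)
  have pick: "(\<Sum>y\<in>X. \<delta> y * h y) = h r" for h
  proof -
    have "(\<Sum>y\<in>X. \<delta> y * h y) = (\<Sum>y\<in>X. if y = r then h y else 0)"
      by (rule sum.cong) (auto simp: \<delta>_def)
    then show ?thesis
      using X by simp
  qed
  show ?thesis
    unfolding quad_form_def
    apply (simp only: expand sum.distrib sum_subtractf sum_distrib_left[symmetric] pick)
    apply (simp add: D sum_distrib_left)
    done
qed

section \<open>Negativity of the comb kernel\<close>

lemma quad_form_comb_kernel:
  fixes c :: "'a \<times> 'b \<Rightarrow> complex"
  assumes U: "finite U" and X: "finite X" "r \<in> X"
    and D1_diag: "\<And>u. D1 u u = 0" and D2_root: "D2 r r = 0"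
    and sum0: "(\<Sum>p\<in>U \<times> X. c p) = 0"
  defines "mu \<equiv> \<lambda>u. \<Sum>x\<in>X. c (u, x)"
  shows "quad_form (U \<times> X) c (comb_kernel D1 D2 r)
    = quad_form U mu D1 + (\<Sum>u\<in>U. quad_form X (\<lambda>x. c (u, x) - (if x = r then mu u else 0)) D2)"
proof -
  define a where "a u = (\<Sum>x\<in>X. c (u, x) * complex_of_real (D2 x r))" for u
  define b where "b v = (\<Sum>y\<in>X. cnj (c (v, y)) * complex_of_real (D2 r y))" for v
  define Q2 where "Q2 u = quad_form X (\<lambda>x. c (u, x) - (if x = r then mu u else 0)) D2" for u
  define M where "M u v = (\<Sum>x\<in>X. \<Sum>y\<in>X. c (u, x) * cnj (c (v, y))
    * complex_of_real (comb_kernel D1 D2 r (u, x) (v, y)))" for u v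
  have M: "M u v = a u * cnj (mu v) + complex_of_real (D1 u v) * mu u * cnj (mu v) + mu u * b v
    + (if u = v then Q2 u else 0)" for u v
  proof (cases "u = v")
    case True
    have "Q2 u = M u u - cnj (mu u) * a u - mu u * b u"
      unfolding Q2_def quad_form_sub_point_mass[OF X, of D2, OF D2_root]
      by (simp add: M_def quad_form_def comb_kernel_def a_def b_def)
    then show ?thesis
      using True D1_diag by (simp add: algebra_simps)
  next
    case False
    have "M u v = (\<Sum>x\<in>X. \<Sum>y\<in>X. c (u, x) * cnj (c (v, y))
      * (complex_of_real (D2 x r) + complex_of_real (D1 u v) + complex_of_real (D2 r y)))"
      unfolding M_def comb_kernel_def using False by simp
    also have "\<dots> = a u * cnj (mu v) + complex_of_real (D1 u v) * mu u * cnj (mu v) + mu u * b v"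
      unfolding sum_sum_separable a_def b_def mu_def by (simp add: cnj_sum)
    finally show ?thesis
      using False by simp
  qed
  have pairs: "(\<Sum>p\<in>U \<times> X. h p) = (\<Sum>u\<in>U. \<Sum>x\<in>X. h (u, x))" for h :: "_ \<Rightarrow> complex"
    by (simp add: sum.cartesian_product)
  have "quad_form (U \<times> X) c (comb_kernel D1 D2 r) = (\<Sum>u\<in>U. \<Sum>v\<in>U. M u v)"
    unfolding quad_form_def M_def pairs by (rule sum.cong[OF refl], rule sum.swap)
  also have "\<dots> = (\<Sum>u\<in>U. a u) * cnj (\<Sum>v\<in>U. mu v) + quad_form U mu D1
      + (\<Sum>u\<in>U. mu u) * (\<Sum>v\<in>U. b v) + (\<Sum>u\<in>U. Q2 u)"
    unfolding M quad_form_def using U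
    by (simp add: sum.distrib sum_product cnj_sum algebra_simps) (rule sum.swap)
  also have "(\<Sum>u\<in>U. mu u) = 0"
    using sum0 by (simp add: mu_def pairs)
  finally show ?thesis
    by (simp add: Q2_def)
qed

lemma quad_form_comb_kernel_neg:
  fixes c :: "'a \<times> 'b \<Rightarrow> complex"
  assumes csnd1: "cond_strict_neg_def V1 D1" and csnd2: "cond_strict_neg_def V2 D2"
    and D1_diag: "\<And>u. D1 u u = 0" and D2_root: "D2 r r = 0"
    and U: "U \<subseteq> V1" "finite U" and X: "X \<subseteq> V2" "finite X" "r \<in> X"
    and outside: "\<And>p. p \<notin> U \<times> X \<Longrightarrow> c p = 0"
    and sum0: "(\<Sum>p\<in>U \<times> X. c p) = 0" and nonzero: "c p \<noteq> 0"
  shows "quad_form (U \<times> X) c (comb_kernel D1 D2 r) < 0"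
proof -
  define mu where "mu = (\<lambda>u. \<Sum>x\<in>X. c (u, x))"
  define l where "l = (\<lambda>u x. c (u, x) - (if x = r then mu u else 0))"
  have mu_sum: "sum mu U = 0"
    using sum0 by (simp add: mu_def sum.cartesian_product)
  have mu_outside: "mu u = 0" if "u \<notin> U" for u
    using that outside by (simp add: mu_def)
  have l_sum: "sum (l u) X = 0" for u
    using X by (simp add: l_def sum_subtractf mu_def)
  have l_outside: "l u x = 0" if "x \<notin> X" for u x
    using that outside X(3) by (auto simp: l_def)
  have Q1: "quad_form U mu D1 \<le> 0"
    using cond_strict_neg_def_nonpos[OF csnd1 U mu_outside mu_sum] .
  have Q2: "quad_form X (l u) D2 \<le> 0" for u
    using cond_strict_neg_def_nonpos[OF csnd2 X(1,2) l_outside l_sum] .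
  have "quad_form U mu D1 + (\<Sum>u\<in>U. quad_form X (l u) D2) < 0"
  proof (cases "\<exists>u\<in>U. \<exists>x. l u x \<noteq> 0")
    case True
    then obtain u x where "u \<in> U" "l u x \<noteq> 0"
      by blast
    then have "quad_form X (l u) D2 < 0"
      using cond_strict_neg_defD[OF csnd2 X(1,2) l_outside l_sum] by blast
    then have "(\<Sum>u\<in>U. quad_form X (l u) D2) < (\<Sum>u\<in>U. 0)"
      using Q2 \<open>u \<in> U\<close> by (intro sum_strict_mono_ex1[OF U(2)]) auto
    then show ?thesis
      using Q1 by (simp add: add_nonpos_neg)
  next
    case False
    \<comment> \<open>then c (u, x) = (if x = r then mu u else 0), so c lives on the roots of the teeth\<close>
    obtain u x where p: "p = (u, x)"
      by (cases p)
    have "u \<in> U"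
      using outside[of p] nonzero p by auto
    then have "mu u \<noteq> 0"
      using False nonzero p by (auto simp: l_def split: if_splits)
    then have "quad_form U mu D1 < 0"
      using cond_strict_neg_defD[OF csnd1 U mu_outside mu_sum] by blast
    moreover have "(\<Sum>u\<in>U. quad_form X (l u) D2) \<le> 0"
      using Q2 by (simp add: sum_nonpos)
    ultimately show ?thesis
      by (simp add: add_neg_nonpos)
  qed
  also have "quad_form U mu D1 + (\<Sum>u\<in>U. quad_form X (l u) D2)
      = quad_form (U \<times> X) c (comb_kernel D1 D2 r)"
    unfolding l_def mu_def
      quad_form_comb_kernel[where ?D1.0 = D1 and ?D2.0 = D2, OF U(2) X(2,3) D1_diag D2_root sum0] ..
  finally show ?thesis .
qed

lemma cond_strict_neg_def_comb_kernel:
  assumes csnd1: "cond_strict_neg_def V1 D1" and csnd2: "cond_strict_neg_def V2 D2"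
    and D1_diag: "\<And>u. D1 u u = 0" and D2_root: "D2 r r = 0" and r: "r \<in> V2"
  shows "cond_strict_neg_def (V1 \<times> V2) (comb_kernel D1 D2 r)"
  unfolding cond_strict_neg_def_iff
proof (intro allI impI, elim exE)
  fix A and c :: "'a \<times> 'b \<Rightarrow> complex" and p
  assume A: "A \<subseteq> V1 \<times> V2" "finite A" "\<forall>p. p \<notin> A \<longrightarrow> c p = 0" "sum c A = 0"
    and "c p \<noteq> 0"
  define U where "U = fst ` A"
  \<comment> \<open>r is added so that moving the mass of a tooth to its root stays inside X\<close>
  define X where "X = insert r (snd ` A)"
  have U: "U \<subseteq> V1" "finite U" and X: "X \<subseteq> V2" "finite X" "r \<in> X"
    using A(1,2) r by (auto simp: U_def X_def)
  have "A \<subseteq> U \<times> X"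
    by (force simp: U_def X_def)
  then have outside: "c q = 0" if "q \<notin> U \<times> X" for q
    using A(3) that by blast
  have "quad_form A c (comb_kernel D1 D2 r) = quad_form (U \<times> X) c (comb_kernel D1 D2 r)"
    using \<open>A \<subseteq> U \<times> X\<close> U(2) X(2) A(3) by (intro quad_form_mono_neutral[symmetric]) auto
  moreover have sum0: "(\<Sum>q\<in>U \<times> X. c q) = 0"
    using \<open>A \<subseteq> U \<times> X\<close> U(2) X(2) A(3,4) by (subst sum.mono_neutral_left[symmetric]) auto
  moreover have "quad_form (U \<times> X) c (comb_kernel D1 D2 r) < 0"
    using quad_form_comb_kernel_neg[OF csnd1 csnd2 D1_diag D2_root U X outside sum0 \<open>c p \<noteq> 0\<close>] .
  ultimately show "quad_form A c (comb_kernel D1 D2 r) < 0"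
    by simp
qed

theorem mainTheorem8:
  fixes V1 :: "'a set" and E1 :: "'a \<Rightarrow> 'a \<Rightarrow> bool"
    and V2 :: "'b set" and E2 :: "'b \<Rightarrow> 'b \<Rightarrow> bool" and r :: 'b
  assumes "connected_graph V1 E1" and "connected_graph V2 E2"
    and "cond_strict_neg_def V1 (\<lambda>x y. real (path_dist E1 x y))"
    and "cond_strict_neg_def V2 (\<lambda>x y. real (path_dist E2 x y))"
    and "r \<in> V2"
  shows "cond_strict_neg_def (comb_vertices V1 V2)
           (\<lambda>p q. real (path_dist (comb_edges E1 E2 r) p q))"
proof -
  let ?K = "comb_kernel (\<lambda>x y. real (path_dist E1 x y)) (\<lambda>x y. real (path_dist E2 x y)) r"
  have "cond_strict_neg_def (V1 \<times> V2) ?K"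
    using assms(3-5) by (intro cond_strict_neg_def_comb_kernel) auto
  moreover have "real (path_dist (comb_edges E1 E2 r) p q) = ?K p q"
    if "p \<in> V1 \<times> V2" "q \<in> V1 \<times> V2" for p q
    using path_dist_comb_edges[OF assms(1,2,5) that] by (simp add: comb_kernel_def)
  ultimately show ?thesis
    unfolding comb_vertices_def by (subst cond_strict_neg_def_cong) auto
qed

end
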